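(* Let $a\ge 2$ and $n_1,n_2\ge1$. Let $M_{n_1}\in\mathrm{Sym}_{n_1}(\mathbb{Z})$ and $M'_{n_2}\in\mathrm{Sym}_{n_2}(\mathbb{Z})$ be fixed with $\mathrm{Cok}_*^{(a)}(M_{n_1}\bmod a)\simeq\mathrm{Cok}_*^{(a)}(M'_{n_2}\bmod a)$. Let $z,\xi_1,\xi_2,\ldots$ be independent and uniformly distributed in $\{0,1,\ldots,a-1\}$. Then the equivalence classes $$\mathrm{Cok}_*^{(a)}\left(\begin{pmatrix}M_{n_1}&\boldsymbol{\xi}_1\\\boldsymbol{\xi}_1^T&z\end{pmatrix}\bmod a\right)\quad\text{and}\quad\mathrm{Cok}_*^{(a)}\left(\begin{pmatrix}M'_{n_2}&\boldsymbol{\xi}_2\\\boldsymbol{\xi}_2^T&z\end{pmatrix}\bmod a\right)$$ have the same distribution, where $\boldsymbol{\xi}_1=(\xi_1,\ldots,\xi_{n_1})^T$ and $\boldsymbol{\xi}_2=(\xi_1,\ldots,\xi_{n_2})^T$.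
   Context: Cokernel with quasi-pairing: for a prime power $p^e$ and $H_{n_1}\in\mathrm{Sym}_{n_1}(\mathbb{Z}/p^e\mathbb{Z})$, $H'_{n_2}\in\mathrm{Sym}_{n_2}(\mathbb{Z}/p^e\mathbb{Z})$, write $\mathrm{Cok}_*^{(p^e)}(H_{n_1})\simeq\mathrm{Cok}_*^{(p^e)}(H'_{n_2})$ if there exist $n\ge\max\{n_1,n_2\}$ and invertible symmetric $H^c\in\mathrm{Sym}_{n-n_1}(\mathbb{Z}/p^e\mathbb{Z})\cap\mathrm{GL}_{n-n_1}(\mathbb{Z}/p^e\mathbb{Z})$, $H'^c\in\mathrm{Sym}_{n-n_2}(\mathbb{Z}/p^e\mathbb{Z})\cap\mathrm{GL}_{n-n_2}(\mathbb{Z}/p^e\mathbb{Z})$ such that $\mathrm{diag}(H^c,H_{n_1})=U\,\mathrm{diag}(H'^c,H'_{n_2})\,U^T$ for some $U\in\mathrm{GL}_n(\mathbb{Z}/p^e\mathbb{Z})$. This is an equivalence relation; $\mathrm{Cok}_*^{(p^e)}(H)$ denotes the class of $H$. For $a=p_1^{e_1}\cdots p_l^{e_l}$ and symmetric matrices $H,H'$ over $\mathbb{Z}/a\mathbb{Z}$, $\mathrm{Cok}_*^{(a)}(H)\simeq\mathrm{Cok}_*^{(a)}(H')$ means $\mathrm{Cok}_*^{(p_i^{e_i})}(H\bmod p_i^{e_i})\simeq\mathrm{Cok}_*^{(p_i^{e_i})}(H'\bmod p_i^{e_i})$ for all $i$. $\bmod a$ denotes entrywise reduction. *)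

theory Defs
  imports "HOL-Probability.Probability_Mass_Function" "HOL-Computational_Algebra.Primes" "HOL-Number_Theory.Cong"
begin

text \<open>Square matrices of size n are represented as functions nat => nat => int;
  only the entries with indices below n are meaningful. A matrix over Z/qZ is
  represented by any integer lift; everything is stated up to congruence mod q.\<close>

type_synonym imat = "nat \<Rightarrow> nat \<Rightarrow> int"

definition sym_mod :: "int \<Rightarrow> nat \<Rightarrow> imat \<Rightarrow> bool" where
  "sym_mod q n H \<longleftrightarrow> (\<forall>i<n. \<forall>j<n. [H i j = H j i] (mod q))"

definition sym_int :: "nat \<Rightarrow> imat \<Rightarrow> bool" where
  "sym_int n H \<longleftrightarrow> (\<forall>i<n. \<forall>j<n. H i j = H j i)"

definition mat_eq_mod :: "int \<Rightarrow> nat \<Rightarrow> imat \<Rightarrow> imat \<Rightarrow> bool" where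
  "mat_eq_mod q n A B \<longleftrightarrow> (\<forall>i<n. \<forall>j<n. [A i j = B i j] (mod q))"

definition mat_mult :: "nat \<Rightarrow> imat \<Rightarrow> imat \<Rightarrow> imat" where
  "mat_mult n A B = (\<lambda>i j. \<Sum>k<n. A i k * B k j)"

definition mat_transp :: "imat \<Rightarrow> imat" where
  "mat_transp A = (\<lambda>i j. A j i)"

definition id_mat :: imat where
  "id_mat = (\<lambda>i j. if i = j then 1 else 0)"

definition invertible_mod :: "int \<Rightarrow> nat \<Rightarrow> imat \<Rightarrow> bool" where
  "invertible_mod q n U \<longleftrightarrow> (\<exists>V. mat_eq_mod q n (mat_mult n U V) id_mat
                                 \<and> mat_eq_mod q n (mat_mult n V U) id_mat)"

definition block_diag :: "nat \<Rightarrow> imat \<Rightarrow> imat \<Rightarrow> imat" where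
  "block_diag k A B = (\<lambda>i j. if i < k \<and> j < k then A i j
                           else if k \<le> i \<and> k \<le> j then B (i - k) (j - k) else 0)"

definition cok_equiv_pp :: "int \<Rightarrow> nat \<Rightarrow> imat \<Rightarrow> nat \<Rightarrow> imat \<Rightarrow> bool" where
  "cok_equiv_pp q n1 H n2 H' \<longleftrightarrow>
     (\<exists>n Hc Hc' U. n \<ge> max n1 n2 \<and>
        sym_mod q (n - n1) Hc \<and> invertible_mod q (n - n1) Hc \<and>
        sym_mod q (n - n2) Hc' \<and> invertible_mod q (n - n2) Hc' \<and>
        invertible_mod q n U \<and>
        mat_eq_mod q n (block_diag (n - n1) Hc H)
          (mat_mult n (mat_mult n U (block_diag (n - n2) Hc' H')) (mat_transp U)))"

text \<open>The relation for general a = p_1^{e_1} ... p_l^{e_l}: componentwise at each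
  exact prime power dividing a (reduction mod p^e is implicit in congruence mod p^e).\<close>
definition cok_equiv :: "nat \<Rightarrow> nat \<Rightarrow> imat \<Rightarrow> nat \<Rightarrow> imat \<Rightarrow> bool" where
  "cok_equiv a n1 H n2 H' \<longleftrightarrow>
     (\<forall>p \<in> prime_factors a. cok_equiv_pp (int (p ^ multiplicity p a)) n1 H n2 H')"

definition cok_class :: "nat \<Rightarrow> nat \<Rightarrow> imat \<Rightarrow> (nat \<times> imat) set" where
  "cok_class a n H = {(m, K). sym_mod (int a) m K \<and> cok_equiv a n H m K}"

definition border :: "nat \<Rightarrow> imat \<Rightarrow> (nat \<Rightarrow> int) \<Rightarrow> int \<Rightarrow> imat" where
  "border n M xi z = (\<lambda>i j. if i < n \<and> j < n then M i j
                          else if i < n \<and> j = n then xi i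
                          else if i = n \<and> j < n then xi j
                          else if i = n \<and> j = n then z else 0)"

text \<open>Sample space: z and xi_1,...,xi_m (stored as xi 0, ..., xi (m-1)) uniform in
  {0,...,a-1}; the remaining entries of xi are fixed to 0 (they do not matter).\<close>
definition sample_space :: "nat \<Rightarrow> nat \<Rightarrow> (int \<times> (nat \<Rightarrow> int)) set" where
  "sample_space a m = {(z, xi). z \<in> {0..<int a} \<and> (\<forall>i<m. xi i \<in> {0..<int a}) \<and> (\<forall>i\<ge>m. xi i = 0)}"

end

(* By the Chinese remainder theorem the prime-power witnesses of Cok_*(M) ~ Cok_*(M') glue to
   invertible symmetric A, A' and an invertible U over Z/aZ with diag(A, M) = U diag(A', M') U^T.
   Bordering by a uniform vector and a uniform corner z, the distribution of the class is the
   same for M and for diag(A, M): a symmetric row/column operation clears the part of the border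
   vector along A, changing z only by a quantity independent of z, and z stays uniform.
   Congruence by diag(U, 1) transports the border vector by U, a bijection of (Z/aZ)^n, so the
   distributions for diag(A, M) and diag(A', M') agree. *)

theory Submission
  imports Defs
begin

section \<open>Matrices modulo q\<close>

abbreviation sandwich :: "nat \<Rightarrow> imat \<Rightarrow> imat \<Rightarrow> imat" where
  "sandwich n U Y \<equiv> mat_mult n (mat_mult n U Y) (mat_transp U)"

definition mat_vec :: "nat \<Rightarrow> imat \<Rightarrow> (nat \<Rightarrow> int) \<Rightarrow> nat \<Rightarrow> int" where
  "mat_vec n A v = (\<lambda>i. \<Sum>j<n. A i j * v j)"

lemma mat_mult_assoc: "mat_mult n (mat_mult n A B) C = mat_mult n A (mat_mult n B C)"
  unfolding mat_mult_def
  by (auto simp: fun_eq_iff sum_distrib_left sum_distrib_right mult.assoc intro: sum.swap)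

lemma mat_transp_mult: "mat_transp (mat_mult n A B) = mat_mult n (mat_transp B) (mat_transp A)"
  by (simp add: fun_eq_iff mat_mult_def mat_transp_def mult.commute)

lemma mat_transp_id [simp]: "mat_transp id_mat = id_mat"
  by (auto simp: mat_transp_def id_mat_def fun_eq_iff)

lemma sandwich_sandwich: "sandwich n U (sandwich n V Y) = sandwich n (mat_mult n U V) Y"
  by (simp add: mat_mult_assoc mat_transp_mult)

lemma mat_vec_mat_vec: "mat_vec n A (mat_vec n B v) = mat_vec n (mat_mult n A B) v"
  unfolding mat_vec_def mat_mult_def
  by (auto simp: fun_eq_iff sum_distrib_left sum_distrib_right mult.assoc intro: sum.swap)

lemma mat_vec_id: "i < n \<Longrightarrow> mat_vec n id_mat v i = v i"
  by (simp add: mat_vec_def id_mat_def if_distrib[of "\<lambda>x. x * _"] sum.delta cong: if_cong)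

lemma mat_eq_mod_refl [simp]: "mat_eq_mod q n A A"
  by (simp add: mat_eq_mod_def)

lemma mat_eq_mod_sym: "mat_eq_mod q n A B \<Longrightarrow> mat_eq_mod q n B A"
  by (simp add: mat_eq_mod_def cong_sym)

lemma mat_eq_mod_trans [trans]: "mat_eq_mod q n A B \<Longrightarrow> mat_eq_mod q n B C \<Longrightarrow> mat_eq_mod q n A C"
  unfolding mat_eq_mod_def by (blast intro: cong_trans)

lemma mat_eq_modI: "(\<And>i j. i < n \<Longrightarrow> j < n \<Longrightarrow> A i j = B i j) \<Longrightarrow> mat_eq_mod q n A B"
  by (simp add: mat_eq_mod_def)

lemma mat_eq_mod_mult:
  "mat_eq_mod q n A A' \<Longrightarrow> mat_eq_mod q n B B' \<Longrightarrow> mat_eq_mod q n (mat_mult n A B) (mat_mult n A' B')"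
  unfolding mat_eq_mod_def mat_mult_def by (auto intro!: cong_sum cong_mult)

lemma mat_eq_mod_transp: "mat_eq_mod q n A B \<Longrightarrow> mat_eq_mod q n (mat_transp A) (mat_transp B)"
  by (simp add: mat_eq_mod_def mat_transp_def)

lemma mat_eq_mod_sandwich:
  "mat_eq_mod q n U U' \<Longrightarrow> mat_eq_mod q n Y Y' \<Longrightarrow> mat_eq_mod q n (sandwich n U Y) (sandwich n U' Y')"
  by (intro mat_eq_mod_mult mat_eq_mod_transp)

lemma mat_eq_mod_dvd: "mat_eq_mod q n A B \<Longrightarrow> q' dvd q \<Longrightarrow> mat_eq_mod q' n A B"
  unfolding mat_eq_mod_def by (blast intro: cong_dvd_modulus)

lemma sym_mod_dvd: "sym_mod q n A \<Longrightarrow> q' dvd q \<Longrightarrow> sym_mod q' n A"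
  unfolding sym_mod_def by (blast intro: cong_dvd_modulus)

lemma sym_mod_cong:
  assumes "mat_eq_mod q n A A'" "sym_mod q n A'"
  shows "sym_mod q n A"
  unfolding sym_mod_def
proof (intro allI impI)
  fix i j assume "i < n" "j < n"
  then have "[A i j = A' i j] (mod q)" "[A' i j = A' j i] (mod q)" "[A j i = A' j i] (mod q)"
    using assms by (simp_all add: mat_eq_mod_def sym_mod_def)
  then show "[A i j = A j i] (mod q)"
    using cong_trans cong_sym by metis
qed

lemma sym_int_imp_sym_mod: "sym_int n A \<Longrightarrow> sym_mod q n A"
  by (simp add: sym_int_def sym_mod_def)

lemma mat_mult_id_left: "mat_eq_mod q n (mat_mult n id_mat A) A"
  by (rule mat_eq_modI) (simp add: mat_mult_def mat_vec_id[unfolded mat_vec_def])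

lemma mat_mult_id_right: "mat_eq_mod q n (mat_mult n A id_mat) A"
  by (rule mat_eq_modI)
     (simp add: mat_mult_def id_mat_def if_distrib[of "\<lambda>x. _ * x"] sum.delta' cong: if_cong)

lemma sandwich_id: "mat_eq_mod q n (sandwich n id_mat Y) Y"
  using mat_eq_mod_trans[OF mat_mult_id_right mat_mult_id_left] by simp

lemma mat_mult_inverse_cancel:
  assumes "mat_eq_mod q n (mat_mult n B C) id_mat"
  shows "mat_eq_mod q n (mat_mult n (mat_mult n A B) (mat_mult n C D)) (mat_mult n A D)"
proof -
  have "mat_eq_mod q n (mat_mult n A (mat_mult n (mat_mult n B C) D)) (mat_mult n A (mat_mult n id_mat D))"
    using assms by (intro mat_eq_mod_mult) simp_all
  also have "mat_eq_mod q n \<dots> (mat_mult n A D)"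
    by (intro mat_eq_mod_mult mat_mult_id_left mat_eq_mod_refl)
  finally show ?thesis
    by (simp add: mat_mult_assoc)
qed

lemma mat_vec_inverse_mod:
  assumes "mat_eq_mod q n (mat_mult n A B) id_mat" "i < n"
  shows "[mat_vec n A (mat_vec n B v) i = v i] (mod q)"
proof -
  have "[mat_vec n (mat_mult n A B) v i = mat_vec n id_mat v i] (mod q)"
    unfolding mat_vec_def
  proof (rule cong_sum, rule cong_mult)
    fix j assume "j \<in> {..<n}"
    then show "[mat_mult n A B i j = id_mat i j] (mod q)"
      using assms by (simp add: mat_eq_mod_def)
  qed (rule cong_refl)
  then show ?thesis using assms(2) by (simp add: mat_vec_mat_vec mat_vec_id)
qed

lemma mat_vec_cong:
  "(\<And>j. j < n \<Longrightarrow> [v j = v' j] (mod q)) \<Longrightarrow> [mat_vec n A v i = mat_vec n A v' i] (mod q)"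
  unfolding mat_vec_def by (rule cong_sum, rule cong_mult) (simp_all add: cong_refl)

lemma invertible_mod_id: "invertible_mod q n id_mat"
  unfolding invertible_mod_def by (rule exI[of _ id_mat]) (simp add: mat_mult_id_left)

lemma invertible_mod_mult:
  assumes "invertible_mod q n U" "invertible_mod q n V"
  shows "invertible_mod q n (mat_mult n U V)"
proof -
  obtain U' where U': "mat_eq_mod q n (mat_mult n U U') id_mat" "mat_eq_mod q n (mat_mult n U' U) id_mat"
    using assms(1) unfolding invertible_mod_def by blast
  obtain V' where V': "mat_eq_mod q n (mat_mult n V V') id_mat" "mat_eq_mod q n (mat_mult n V' V) id_mat"
    using assms(2) unfolding invertible_mod_def by blast
  have "mat_eq_mod q n (mat_mult n (mat_mult n U V) (mat_mult n V' U')) id_mat"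
    using mat_eq_mod_trans[OF mat_mult_inverse_cancel[OF V'(1)] U'(1)] .
  moreover have "mat_eq_mod q n (mat_mult n (mat_mult n V' U') (mat_mult n U V)) id_mat"
    using mat_eq_mod_trans[OF mat_mult_inverse_cancel[OF U'(2)] V'(2)] .
  ultimately show ?thesis unfolding invertible_mod_def by blast
qed

lemma invertible_mod_dvd: "invertible_mod q n U \<Longrightarrow> q' dvd q \<Longrightarrow> invertible_mod q' n U"
  unfolding invertible_mod_def using mat_eq_mod_dvd by blast

lemma invertible_mod_cong:
  assumes "mat_eq_mod q n U U'" "invertible_mod q n U'"
  shows "invertible_mod q n U"
proof -
  obtain V where V: "mat_eq_mod q n (mat_mult n U' V) id_mat" "mat_eq_mod q n (mat_mult n V U') id_mat"
    using assms(2) unfolding invertible_mod_def by blast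
  have "mat_eq_mod q n (mat_mult n U V) id_mat" "mat_eq_mod q n (mat_mult n V U) id_mat"
    using mat_eq_mod_trans[OF mat_eq_mod_mult[OF assms(1) mat_eq_mod_refl] V(1)]
      mat_eq_mod_trans[OF mat_eq_mod_mult[OF mat_eq_mod_refl assms(1)] V(2)] .
  then show ?thesis unfolding invertible_mod_def by blast
qed

definition nondeg_sym :: "int \<Rightarrow> nat \<Rightarrow> imat \<Rightarrow> bool" where
  "nondeg_sym q n A \<longleftrightarrow> sym_mod q n A \<and> invertible_mod q n A"

lemma nondeg_sym_id: "nondeg_sym q n id_mat"
  using invertible_mod_id[of q n] by (simp add: nondeg_sym_def sym_mod_def id_mat_def)

lemma nondeg_sym_dvd: "nondeg_sym q n A \<Longrightarrow> q' dvd q \<Longrightarrow> nondeg_sym q' n A"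
  unfolding nondeg_sym_def using sym_mod_dvd invertible_mod_dvd by blast

lemma nondeg_sym_cong: "mat_eq_mod q n A A' \<Longrightarrow> nondeg_sym q n A' \<Longrightarrow> nondeg_sym q n A"
  unfolding nondeg_sym_def using sym_mod_cong invertible_mod_cong by blast

definition mat_congruent :: "int \<Rightarrow> nat \<Rightarrow> imat \<Rightarrow> imat \<Rightarrow> bool" where
  "mat_congruent q n X Y \<longleftrightarrow> (\<exists>U. invertible_mod q n U \<and> mat_eq_mod q n X (sandwich n U Y))"

lemma mat_eq_mod_imp_mat_congruent: "mat_eq_mod q n X Y \<Longrightarrow> mat_congruent q n X Y"
  unfolding mat_congruent_def
  using invertible_mod_id mat_eq_mod_trans[OF _ mat_eq_mod_sym[OF sandwich_id]] by blast

lemma mat_congruent_refl: "mat_congruent q n X X"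
  by (simp add: mat_eq_mod_imp_mat_congruent)

lemma mat_congruent_trans [trans]:
  assumes "mat_congruent q n X Y" "mat_congruent q n Y Z"
  shows "mat_congruent q n X Z"
proof -
  obtain U V where U: "invertible_mod q n U" "mat_eq_mod q n X (sandwich n U Y)"
    and V: "invertible_mod q n V" "mat_eq_mod q n Y (sandwich n V Z)"
    using assms unfolding mat_congruent_def by blast
  have "mat_eq_mod q n X (sandwich n (mat_mult n U V) Z)"
    using mat_eq_mod_trans[OF U(2) mat_eq_mod_sandwich[OF mat_eq_mod_refl V(2)]]
    by (simp only: sandwich_sandwich)
  then show ?thesis unfolding mat_congruent_def using invertible_mod_mult[OF U(1) V(1)] by blast
qed

lemma mat_congruent_sym:
  assumes "mat_congruent q n X Y"
  shows "mat_congruent q n Y X"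
proof -
  obtain U where U: "invertible_mod q n U" "mat_eq_mod q n X (sandwich n U Y)"
    using assms unfolding mat_congruent_def by blast
  obtain V where V: "mat_eq_mod q n (mat_mult n U V) id_mat" "mat_eq_mod q n (mat_mult n V U) id_mat"
    using U(1) unfolding invertible_mod_def by blast
  have "mat_eq_mod q n (sandwich n V X) (sandwich n (mat_mult n V U) Y)"
    using mat_eq_mod_sandwich[OF mat_eq_mod_refl U(2)] by (simp only: sandwich_sandwich)
  also have "mat_eq_mod q n \<dots> (sandwich n id_mat Y)"
    by (rule mat_eq_mod_sandwich[OF V(2) mat_eq_mod_refl])
  also have "mat_eq_mod q n \<dots> Y"
    by (rule sandwich_id)
  finally have "mat_eq_mod q n Y (sandwich n V X)"
    by (rule mat_eq_mod_sym)
  moreover have "invertible_mod q n V"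
    using V unfolding invertible_mod_def by blast
  ultimately show ?thesis unfolding mat_congruent_def by blast
qed

lemma mat_eq_mod_mat_congruent_trans [trans]:
  "mat_eq_mod q n X Y \<Longrightarrow> mat_congruent q n Y Z \<Longrightarrow> mat_congruent q n X Z"
  by (rule mat_congruent_trans[OF mat_eq_mod_imp_mat_congruent])

lemma mat_congruent_mat_eq_mod_trans [trans]:
  "mat_congruent q n X Y \<Longrightarrow> mat_eq_mod q n Y Z \<Longrightarrow> mat_congruent q n X Z"
  by (rule mat_congruent_trans[OF _ mat_eq_mod_imp_mat_congruent])

lemma mat_congruent_dvd: "mat_congruent q n X Y \<Longrightarrow> q' dvd q \<Longrightarrow> mat_congruent q' n X Y"
  unfolding mat_congruent_def using mat_eq_mod_dvd invertible_mod_dvd by blast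

lemma sum_lessThan_add: "(\<Sum>t<k + m. f t) = (\<Sum>t<k. f t) + (\<Sum>s<m. f (k + s))"
  for f :: "nat \<Rightarrow> 'a::comm_monoid_add"
  by (induction m) (simp_all add: add.assoc)

lemma mat_mult_block_diag:
  "mat_eq_mod q (k + m) (mat_mult (k + m) (block_diag k A B) (block_diag k C D))
     (block_diag k (mat_mult k A C) (mat_mult m B D))"
proof (rule mat_eq_modI)
  fix i j assume "i < k + m" "j < k + m"
  then show "mat_mult (k + m) (block_diag k A B) (block_diag k C D) i j =
      block_diag k (mat_mult k A C) (mat_mult m B D) i j"
    unfolding mat_mult_def block_diag_def by (auto simp: sum_lessThan_add)
qed

lemma mat_transp_block_diag: "mat_transp (block_diag k A B) = block_diag k (mat_transp A) (mat_transp B)"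
  by (auto simp: fun_eq_iff mat_transp_def block_diag_def)

lemma mat_eq_mod_block_diag:
  "mat_eq_mod q k A A' \<Longrightarrow> mat_eq_mod q m B B' \<Longrightarrow>
   mat_eq_mod q (k + m) (block_diag k A B) (block_diag k A' B')"
  unfolding mat_eq_mod_def block_diag_def by (auto simp: cong_refl)

lemma block_diag_id: "block_diag k id_mat id_mat = id_mat"
  by (auto simp: fun_eq_iff id_mat_def block_diag_def)

lemma block_diag_assoc: "block_diag k P (block_diag c A M) = block_diag (k + c) (block_diag k P A) M"
  by (auto simp: fun_eq_iff block_diag_def)

lemma block_diag_0: "block_diag 0 A B = B"
  by (auto simp: fun_eq_iff block_diag_def)

lemma invertible_mod_block_diag:
  assumes "invertible_mod q k U" "invertible_mod q m V"
  shows "invertible_mod q (k + m) (block_diag k U V)"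
proof -
  obtain U' where U': "mat_eq_mod q k (mat_mult k U U') id_mat" "mat_eq_mod q k (mat_mult k U' U) id_mat"
    using assms(1) unfolding invertible_mod_def by blast
  obtain V' where V': "mat_eq_mod q m (mat_mult m V V') id_mat" "mat_eq_mod q m (mat_mult m V' V) id_mat"
    using assms(2) unfolding invertible_mod_def by blast
  have "mat_eq_mod q (k + m) (mat_mult (k + m) (block_diag k U V) (block_diag k U' V')) id_mat"
    using mat_eq_mod_trans[OF mat_mult_block_diag mat_eq_mod_block_diag[OF U'(1) V'(1)]]
    by (simp only: block_diag_id)
  moreover have "mat_eq_mod q (k + m) (mat_mult (k + m) (block_diag k U' V') (block_diag k U V)) id_mat"
    using mat_eq_mod_trans[OF mat_mult_block_diag mat_eq_mod_block_diag[OF U'(2) V'(2)]]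
    by (simp only: block_diag_id)
  ultimately show ?thesis unfolding invertible_mod_def by blast
qed

lemma sym_mod_block_diag: "sym_mod q k A \<Longrightarrow> sym_mod q m B \<Longrightarrow> sym_mod q (k + m) (block_diag k A B)"
  unfolding sym_mod_def block_diag_def by (auto simp: cong_refl)

lemma nondeg_sym_block_diag:
  "nondeg_sym q k A \<Longrightarrow> nondeg_sym q m B \<Longrightarrow> nondeg_sym q (k + m) (block_diag k A B)"
  unfolding nondeg_sym_def using sym_mod_block_diag invertible_mod_block_diag by blast

lemma mat_congruent_block_diag:
  assumes "mat_congruent q k X X'" "mat_congruent q m Y Y'"
  shows "mat_congruent q (k + m) (block_diag k X Y) (block_diag k X' Y')"
proof -
  obtain U where U: "invertible_mod q k U" "mat_eq_mod q k X (sandwich k U X')"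
    using assms(1) unfolding mat_congruent_def by blast
  obtain V where V: "invertible_mod q m V" "mat_eq_mod q m Y (sandwich m V Y')"
    using assms(2) unfolding mat_congruent_def by blast
  have "mat_eq_mod q (k + m) (block_diag k X Y) (block_diag k (sandwich k U X') (sandwich m V Y'))"
    by (rule mat_eq_mod_block_diag[OF U(2) V(2)])
  also have "mat_eq_mod q (k + m) \<dots>
      (mat_mult (k + m) (block_diag k (mat_mult k U X') (mat_mult m V Y')) (block_diag k (mat_transp U) (mat_transp V)))"
    by (rule mat_eq_mod_sym[OF mat_mult_block_diag])
  also have "mat_eq_mod q (k + m) \<dots> (sandwich (k + m) (block_diag k U V) (block_diag k X' Y'))"
    unfolding mat_transp_block_diag
    by (rule mat_eq_mod_mult[OF mat_eq_mod_sym[OF mat_mult_block_diag] mat_eq_mod_refl])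
  finally show ?thesis
    unfolding mat_congruent_def using invertible_mod_block_diag[OF U(1) V(1)] by blast
qed

definition perm_mat :: "(nat \<Rightarrow> nat) \<Rightarrow> imat" where
  "perm_mat \<sigma> = (\<lambda>i j. if j = \<sigma> i then 1 else 0)"

lemma mat_mult_perm_mat_left:
  assumes "i < n" "\<sigma> i < n"
  shows "mat_mult n (perm_mat \<sigma>) X i j = X (\<sigma> i) j"
  using assms unfolding mat_mult_def perm_mat_def
  by (simp add: if_distrib[of "\<lambda>x. x * _"] sum.delta' cong: if_cong)

lemma mat_mult_perm_mat_right:
  assumes "j < n" "\<sigma> j < n"
  shows "mat_mult n X (mat_transp (perm_mat \<sigma>)) i j = X i (\<sigma> j)"
  using assms unfolding mat_mult_def mat_transp_def perm_mat_def
  by (simp add: if_distrib[of "\<lambda>x. _ * x"] sum.delta cong: if_cong)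

lemma sandwich_perm_mat:
  assumes "i < n" "j < n" "\<And>i. i < n \<Longrightarrow> \<sigma> i < n"
  shows "sandwich n (perm_mat \<sigma>) X i j = X (\<sigma> i) (\<sigma> j)"
  using assms by (simp add: mat_mult_perm_mat_right mat_mult_perm_mat_left)

lemma invertible_mod_perm_mat:
  assumes "\<And>i. i < n \<Longrightarrow> \<sigma> i < n" "\<And>i. i < n \<Longrightarrow> \<tau> i < n"
    and "\<And>i. i < n \<Longrightarrow> \<tau> (\<sigma> i) = i" "\<And>i. i < n \<Longrightarrow> \<sigma> (\<tau> i) = i"
  shows "invertible_mod q n (perm_mat \<sigma>)"
proof -
  have "mat_eq_mod q n (mat_mult n (perm_mat \<sigma>) (perm_mat \<tau>)) id_mat"
    by (rule mat_eq_modI) (simp add: mat_mult_perm_mat_left assms, auto simp: perm_mat_def id_mat_def assms)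
  moreover have "mat_eq_mod q n (mat_mult n (perm_mat \<tau>) (perm_mat \<sigma>)) id_mat"
    by (rule mat_eq_modI) (simp add: mat_mult_perm_mat_left assms, auto simp: perm_mat_def id_mat_def assms)
  ultimately show ?thesis unfolding invertible_mod_def by blast
qed

lemma mat_congruent_block_diag_swap: "mat_congruent q (k + l) (block_diag k X Y) (block_diag l Y X)"
proof -
  define \<sigma> where "\<sigma> i = (if i < k then i + l else i - k)" for i
  define \<tau> where "\<tau> i = (if i < l then i + k else i - l)" for i
  have "invertible_mod q (k + l) (perm_mat \<sigma>)"
    by (rule invertible_mod_perm_mat[of _ _ \<tau>]) (auto simp: \<sigma>_def \<tau>_def)
  moreover have "mat_eq_mod q (k + l) (block_diag k X Y) (sandwich (k + l) (perm_mat \<sigma>) (block_diag l Y X))"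
  proof (rule mat_eq_modI)
    fix i j assume "i < k + l" "j < k + l"
    then have "sandwich (k + l) (perm_mat \<sigma>) (block_diag l Y X) i j = block_diag l Y X (\<sigma> i) (\<sigma> j)"
      by (intro sandwich_perm_mat) (auto simp: \<sigma>_def)
    with \<open>i < k + l\<close> \<open>j < k + l\<close> show "block_diag k X Y i j = sandwich (k + l) (perm_mat \<sigma>) (block_diag l Y X) i j"
      by (auto simp: \<sigma>_def block_diag_def)
  qed
  ultimately show ?thesis unfolding mat_congruent_def by blast
qed

section \<open>The relation \<open>Cok\<^sub>*\<close> at a single modulus\<close>

lemma cok_equiv_pp_iff:
  "cok_equiv_pp q n1 H n2 H' \<longleftrightarrow>
     (\<exists>c A c' A'. c + n1 = c' + n2 \<and> nondeg_sym q c A \<and> nondeg_sym q c' A' \<and>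
        mat_congruent q (c + n1) (block_diag c A H) (block_diag c' A' H'))"
proof
  assume "cok_equiv_pp q n1 H n2 H'"
  then obtain n Hc Hc' U where "max n1 n2 \<le> n"
      "nondeg_sym q (n - n1) Hc" "nondeg_sym q (n - n2) Hc'" "invertible_mod q n U"
      "mat_eq_mod q n (block_diag (n - n1) Hc H) (sandwich n U (block_diag (n - n2) Hc' H'))"
    unfolding cok_equiv_pp_def nondeg_sym_def by blast
  then show "\<exists>c A c' A'. c + n1 = c' + n2 \<and> nondeg_sym q c A \<and> nondeg_sym q c' A' \<and>
      mat_congruent q (c + n1) (block_diag c A H) (block_diag c' A' H')"
    unfolding mat_congruent_def by (intro exI[of _ "n - n1"] exI[of _ Hc] exI[of _ "n - n2"] exI[of _ Hc']) auto
next
  assume "\<exists>c A c' A'. c + n1 = c' + n2 \<and> nondeg_sym q c A \<and> nondeg_sym q c' A' \<and>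
      mat_congruent q (c + n1) (block_diag c A H) (block_diag c' A' H')"
  then obtain c A c' A' U where sizes: "c + n1 = c' + n2"
      and "nondeg_sym q c A" "nondeg_sym q c' A'" "invertible_mod q (c + n1) U"
      "mat_eq_mod q (c + n1) (block_diag c A H) (sandwich (c + n1) U (block_diag c' A' H'))"
    unfolding mat_congruent_def by blast
  moreover have "c + n1 - n1 = c" "c + n1 - n2 = c'" "max n1 n2 \<le> c + n1"
    using sizes by auto
  ultimately show "cok_equiv_pp q n1 H n2 H'"
    unfolding cok_equiv_pp_def nondeg_sym_def
    by (intro exI[of _ "c + n1"] exI[of _ A] exI[of _ A'] exI[of _ U]) simp
qed

lemma cok_equiv_ppI:
  "c + n1 = c' + n2 \<Longrightarrow> nondeg_sym q c A \<Longrightarrow> nondeg_sym q c' A' \<Longrightarrow>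
   mat_congruent q (c + n1) (block_diag c A H) (block_diag c' A' H') \<Longrightarrow> cok_equiv_pp q n1 H n2 H'"
  unfolding cok_equiv_pp_iff by blast

lemma cok_equiv_pp_sym: "cok_equiv_pp q n1 H n2 H' \<Longrightarrow> cok_equiv_pp q n2 H' n1 H"
  unfolding cok_equiv_pp_iff by (metis mat_congruent_sym)

lemma cok_equiv_pp_trans:
  assumes "cok_equiv_pp q n1 H n2 H'" "cok_equiv_pp q n2 H' n3 H''"
  shows "cok_equiv_pp q n1 H n3 H''"
proof -
  obtain c A c' A' where 1: "c + n1 = c' + n2" "nondeg_sym q c A" "nondeg_sym q c' A'"
      "mat_congruent q (c + n1) (block_diag c A H) (block_diag c' A' H')"
    using assms(1) unfolding cok_equiv_pp_iff by blast
  obtain d B d' B' where 2: "d + n2 = d' + n3" "nondeg_sym q d B" "nondeg_sym q d' B'"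
      "mat_congruent q (d + n2) (block_diag d B H') (block_diag d' B' H'')"
    using assms(2) unfolding cok_equiv_pp_iff by blast
  define N where "N = d + c + n1"
  have sizes: "d + (c + n1) = N" "(d + c') + n2 = N" "(c' + d) + n2 = N" "c' + (d + n2) = N"
    "(c' + d') + n3 = N" using 1(1) 2(1) by (auto simp: N_def)
  \<comment> \<open>pad each witness by the other's invertible block, and swap the two padding blocks\<close>
  have "mat_congruent q N (block_diag (d + c) (block_diag d B A) H) (block_diag (d + c') (block_diag d B A') H')"
    using mat_congruent_block_diag[OF mat_congruent_refl[of q d B] 1(4)]
    by (simp only: block_diag_assoc sizes)
  also have "mat_congruent q N \<dots> (block_diag (c' + d) (block_diag c' A' B) H')"
    using mat_congruent_block_diag[OF mat_congruent_block_diag_swap[of q d c' B A'] mat_congruent_refl[of q n2 H']]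
    by (simp only: sizes add.commute[of c' d])
  also have "mat_congruent q N \<dots> (block_diag (c' + d') (block_diag c' A' B') H'')"
    using mat_congruent_block_diag[OF mat_congruent_refl[of q c' A'] 2(4)]
    by (simp only: block_diag_assoc sizes)
  finally show ?thesis
    using nondeg_sym_block_diag[OF 2(2) 1(2)] nondeg_sym_block_diag[OF 1(3) 2(3)] sizes
    by (intro cok_equiv_ppI[where c = "d + c" and c' = "c' + d'"]) (simp_all add: N_def)
qed

lemma cok_equiv_pp_dvd:
  assumes "cok_equiv_pp q n1 H n2 H'" "q' dvd q"
  shows "cok_equiv_pp q' n1 H n2 H'"
proof -
  obtain c A c' A' where wit: "c + n1 = c' + n2" "nondeg_sym q c A" "nondeg_sym q c' A'"
      "mat_congruent q (c + n1) (block_diag c A H) (block_diag c' A' H')"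
    using assms(1) unfolding cok_equiv_pp_iff by blast
  show ?thesis
    by (rule cok_equiv_ppI[OF wit(1) nondeg_sym_dvd[OF wit(2) assms(2)] nondeg_sym_dvd[OF wit(3) assms(2)]
          mat_congruent_dvd[OF wit(4) assms(2)]])
qed

lemma cok_equiv_pp_stabilize:
  assumes "nondeg_sym q c A" "mat_congruent q (c + k) X (block_diag c A Y)"
  shows "cok_equiv_pp q (c + k) X k Y"
  using assms nondeg_sym_id[of q 0] by (intro cok_equiv_ppI[where c = 0 and c' = c]) (simp_all add: block_diag_0)

lemma mat_congruent_imp_cok_equiv_pp: "mat_congruent q n X Y \<Longrightarrow> cok_equiv_pp q n X n Y"
  using cok_equiv_pp_stabilize[of q 0 id_mat n X Y] nondeg_sym_id by (simp add: block_diag_0)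

lemma cok_equiv_pp_padded:
  assumes "cok_equiv_pp q n1 H n2 H'"
  shows "\<exists>c0. \<forall>e\<ge>c0. \<exists>A c' A'. e + n1 = c' + n2 \<and> nondeg_sym q e A \<and> nondeg_sym q c' A' \<and>
      mat_congruent q (e + n1) (block_diag e A H) (block_diag c' A' H')"
proof -
  obtain c A c' A' where wit: "c + n1 = c' + n2" "nondeg_sym q c A" "nondeg_sym q c' A'"
      "mat_congruent q (c + n1) (block_diag c A H) (block_diag c' A' H')"
    using assms unfolding cok_equiv_pp_iff by blast
  have "\<exists>A c' A'. e + n1 = c' + n2 \<and> nondeg_sym q e A \<and> nondeg_sym q c' A' \<and>
      mat_congruent q (e + n1) (block_diag e A H) (block_diag c' A' H')" if "c \<le> e" for e
  proof -
    define d where "d = e - c"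
    have sizes: "d + c = e" "d + (c + n1) = e + n1" "e + n1 = (d + c') + n2"
      using that wit(1) by (auto simp: d_def)
    have "mat_congruent q (e + n1) (block_diag e (block_diag d id_mat A) H) (block_diag (d + c') (block_diag d id_mat A') H')"
      using mat_congruent_block_diag[OF mat_congruent_refl[of q d id_mat] wit(4)]
      by (simp only: block_diag_assoc sizes)
    moreover have "nondeg_sym q e (block_diag d id_mat A)"
      using nondeg_sym_block_diag[OF nondeg_sym_id[of q d] wit(2)] by (simp only: sizes)
    ultimately show ?thesis
      using sizes(3) nondeg_sym_block_diag[OF nondeg_sym_id[of q d] wit(3)] by blast
  qed
  then show ?thesis
    by blast
qed

section \<open>Chinese remainder theorem over the prime-power parts\<close>

abbreviation p_part :: "nat \<Rightarrow> nat \<Rightarrow> int" where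
  "p_part a p \<equiv> int (p ^ multiplicity p a)"

lemma p_parts_coprime:
  fixes a p r :: nat
  assumes "p \<in> prime_factors a" "r \<in> prime_factors a" "p \<noteq> r"
  shows "coprime (p ^ multiplicity p a) (r ^ multiplicity r a)"
proof -
  have "prime p" "prime r"
    using assms(1,2) by auto
  then have "coprime p r"
    using assms(3) by (rule primes_coprime)
  then show ?thesis
    by simp
qed

lemma cong_p_parts_imp_cong:
  fixes x y :: int
  assumes "0 < a" and "\<And>p. p \<in> prime_factors a \<Longrightarrow> [x = y] (mod p_part a p)"
  shows "[x = y] (mod int a)"
proof -
  have "[x = y] (mod (\<Prod>p\<in>prime_factors a. p_part a p))"
  proof (rule cong_cong_prod_coprime)
    show "\<forall>p\<in>prime_factors a. [x = y] (mod p_part a p)"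
      using assms(2) by blast
    show "\<forall>p\<in>prime_factors a. \<forall>r\<in>prime_factors a. p \<noteq> r \<longrightarrow> coprime (p_part a p) (p_part a r)"
      unfolding coprime_int_iff using p_parts_coprime by blast
  qed
  moreover have "(\<Prod>p\<in>prime_factors a. p_part a p) = int a"
    unfolding of_nat_prod[symmetric] using prime_factorization_nat[OF assms(1)] by (rule arg_cong[symmetric])
  ultimately show ?thesis
    by (simp only:)
qed

lemma p_parts_crt:
  fixes u :: "nat \<Rightarrow> int"
  shows "\<exists>x. \<forall>p\<in>prime_factors a. [x = u p] (mod p_part a p)"
proof -
  have "\<forall>p\<in>prime_factors a. \<forall>r\<in>prime_factors a. p \<noteq> r \<longrightarrow> coprime (p ^ multiplicity p a) (r ^ multiplicity r a)"
    using p_parts_coprime by blast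
  then obtain x :: nat where x: "\<forall>p\<in>prime_factors a. [x = nat (u p mod p_part a p)] (mod p ^ multiplicity p a)"
    using chinese_remainder_nat[where A = "prime_factors a" and m = "\<lambda>p. p ^ multiplicity p a"
        and u = "\<lambda>p. nat (u p mod p_part a p)"] finite_set_mset
    by blast
  have "[int x = u p] (mod p_part a p)" if "p \<in> prime_factors a" for p
  proof -
    have "0 < p_part a p"
      using prime_factors_gt_0_nat[OF that] by simp
    then have eq: "int (nat (u p mod p_part a p)) = u p mod p_part a p"
      by simp
    have "[int x = int (nat (u p mod p_part a p))] (mod p_part a p)"
      using x that by (simp only: cong_int_iff)
    then have "[int x = u p mod p_part a p] (mod p_part a p)"
      by (simp only: eq)
    then show ?thesis
      by (simp add: cong_def)
  qed
  then show ?thesis by blast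
qed

lemma mat_p_parts_crt:
  fixes F :: "nat \<Rightarrow> imat"
  obtains X where "\<And>p. p \<in> prime_factors a \<Longrightarrow> mat_eq_mod (p_part a p) n X (F p)"
proof -
  define X where "X i j = (SOME x. \<forall>p\<in>prime_factors a. [x = F p i j] (mod p_part a p))" for i j
  have "\<forall>p\<in>prime_factors a. [X i j = F p i j] (mod p_part a p)" for i j
    unfolding X_def by (rule someI_ex) (rule p_parts_crt)
  then show thesis
    by (intro that[of X]) (simp add: mat_eq_mod_def)
qed

lemma mat_eq_mod_p_parts:
  assumes "0 < a" and "\<And>p. p \<in> prime_factors a \<Longrightarrow> mat_eq_mod (p_part a p) n X Y"
  shows "mat_eq_mod (int a) n X Y"
  unfolding mat_eq_mod_def
proof (intro allI impI)
  fix i j assume "i < n" "j < n"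
  with assms(2) show "[X i j = Y i j] (mod int a)"
    unfolding mat_eq_mod_def by (blast intro: cong_p_parts_imp_cong[OF assms(1)])
qed

lemma sym_mod_p_parts:
  assumes "0 < a" and "\<And>p. p \<in> prime_factors a \<Longrightarrow> sym_mod (p_part a p) n X"
  shows "sym_mod (int a) n X"
  unfolding sym_mod_def
proof (intro allI impI)
  fix i j assume "i < n" "j < n"
  with assms(2) show "[X i j = X j i] (mod int a)"
    unfolding sym_mod_def by (blast intro: cong_p_parts_imp_cong[OF assms(1)])
qed

lemma invertible_mod_p_parts:
  assumes "0 < a" and "\<And>p. p \<in> prime_factors a \<Longrightarrow> invertible_mod (p_part a p) n U"
  shows "invertible_mod (int a) n U"
proof -
  have "\<forall>p\<in>prime_factors a. \<exists>V. mat_eq_mod (p_part a p) n (mat_mult n U V) id_mat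
      \<and> mat_eq_mod (p_part a p) n (mat_mult n V U) id_mat"
    using assms(2) unfolding invertible_mod_def by blast
  then obtain W where W: "\<And>p. p \<in> prime_factors a \<Longrightarrow> mat_eq_mod (p_part a p) n (mat_mult n U (W p)) id_mat
      \<and> mat_eq_mod (p_part a p) n (mat_mult n (W p) U) id_mat"
    by (metis bchoice)
  obtain V where V: "\<And>p. p \<in> prime_factors a \<Longrightarrow> mat_eq_mod (p_part a p) n V (W p)"
    by (rule mat_p_parts_crt[where a = a and n = n and F = W]) blast
  have "mat_eq_mod (int a) n (mat_mult n U V) id_mat"
  proof (rule mat_eq_mod_p_parts[OF assms(1)])
    fix p assume p: "p \<in> prime_factors a"
    show "mat_eq_mod (p_part a p) n (mat_mult n U V) id_mat"
      using mat_eq_mod_trans[OF mat_eq_mod_mult[OF mat_eq_mod_refl V[OF p]]] W[OF p] by blast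
  qed
  moreover have "mat_eq_mod (int a) n (mat_mult n V U) id_mat"
  proof (rule mat_eq_mod_p_parts[OF assms(1)])
    fix p assume p: "p \<in> prime_factors a"
    show "mat_eq_mod (p_part a p) n (mat_mult n V U) id_mat"
      using mat_eq_mod_trans[OF mat_eq_mod_mult[OF V[OF p] mat_eq_mod_refl]] W[OF p] by blast
  qed
  ultimately show ?thesis
    unfolding invertible_mod_def by blast
qed

lemma nondeg_sym_p_parts:
  assumes "0 < a" and "\<And>p. p \<in> prime_factors a \<Longrightarrow> nondeg_sym (p_part a p) n A"
  shows "nondeg_sym (int a) n A"
proof -
  have "sym_mod (int a) n A"
    by (rule sym_mod_p_parts[OF assms(1)]) (use assms(2) in \<open>simp add: nondeg_sym_def\<close>)
  moreover have "invertible_mod (int a) n A"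
    by (rule invertible_mod_p_parts[OF assms(1)]) (use assms(2) in \<open>simp add: nondeg_sym_def\<close>)
  ultimately show ?thesis
    by (simp add: nondeg_sym_def)
qed

lemma mat_congruent_p_parts:
  assumes "0 < a" and "\<And>p. p \<in> prime_factors a \<Longrightarrow> mat_congruent (p_part a p) n X Y"
  shows "mat_congruent (int a) n X Y"
proof -
  have "\<forall>p\<in>prime_factors a. \<exists>U. invertible_mod (p_part a p) n U \<and> mat_eq_mod (p_part a p) n X (sandwich n U Y)"
    using assms(2) unfolding mat_congruent_def by blast
  from bchoice[OF this] obtain W where W: "\<forall>p\<in>prime_factors a.
      invertible_mod (p_part a p) n (W p) \<and> mat_eq_mod (p_part a p) n X (sandwich n (W p) Y)"
    by blast
  obtain U where U: "\<And>p. p \<in> prime_factors a \<Longrightarrow> mat_eq_mod (p_part a p) n U (W p)"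
    by (rule mat_p_parts_crt[where a = a and n = n and F = W]) blast
  have "invertible_mod (int a) n U"
  proof (rule invertible_mod_p_parts[OF assms(1)])
    fix p assume p: "p \<in> prime_factors a"
    then show "invertible_mod (p_part a p) n U"
      using invertible_mod_cong[OF U[OF p]] W by blast
  qed
  moreover have "mat_eq_mod (int a) n X (sandwich n U Y)"
  proof (rule mat_eq_mod_p_parts[OF assms(1)])
    fix p assume p: "p \<in> prime_factors a"
    then have "mat_eq_mod (p_part a p) n X (sandwich n (W p) Y)"
      using W by blast
    also have "mat_eq_mod (p_part a p) n \<dots> (sandwich n U Y)"
      by (rule mat_eq_mod_sandwich[OF mat_eq_mod_sym[OF U[OF p]] mat_eq_mod_refl])
    finally show "mat_eq_mod (p_part a p) n X (sandwich n U Y)" .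
  qed
  ultimately show ?thesis
    unfolding mat_congruent_def by blast
qed

lemma cok_equiv_common_padding:
  assumes "cok_equiv a n1 H n2 H'"
  obtains e c' Ap A'p where "e + n1 = c' + n2"
    and "\<And>p. p \<in> prime_factors a \<Longrightarrow> nondeg_sym (p_part a p) e (Ap p) \<and> nondeg_sym (p_part a p) c' (A'p p) \<and>
      mat_congruent (p_part a p) (e + n1) (block_diag e (Ap p) H) (block_diag c' (A'p p) H')"
proof -
  have "\<forall>p\<in>prime_factors a. \<exists>c0. \<forall>e\<ge>c0. \<exists>A c' A'. e + n1 = c' + n2 \<and>
      nondeg_sym (p_part a p) e A \<and> nondeg_sym (p_part a p) c' A' \<and>
      mat_congruent (p_part a p) (e + n1) (block_diag e A H) (block_diag c' A' H')"
    using assms cok_equiv_pp_padded unfolding cok_equiv_def by blast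
  from bchoice[OF this] obtain c0 where c0: "\<forall>p\<in>prime_factors a. \<forall>e\<ge>c0 p. \<exists>A c' A'. e + n1 = c' + n2 \<and>
      nondeg_sym (p_part a p) e A \<and> nondeg_sym (p_part a p) c' A' \<and>
      mat_congruent (p_part a p) (e + n1) (block_diag e A H) (block_diag c' A' H')"
    by blast
  define e where "e = n2 + (\<Sum>p\<in>prime_factors a. c0 p)"
  define c' where "c' = e + n1 - n2"
  have sizes: "e + n1 = c' + n2"
    by (simp add: c'_def e_def)
  have "\<forall>p\<in>prime_factors a. \<exists>A A'. nondeg_sym (p_part a p) e A \<and> nondeg_sym (p_part a p) c' A' \<and>
      mat_congruent (p_part a p) (e + n1) (block_diag e A H) (block_diag c' A' H')"
  proof
    fix p assume p: "p \<in> prime_factors a"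
    then have "c0 p \<le> e"
      by (simp add: e_def member_le_sum trans_le_add2)
    with c0 p obtain A c'' A' where "e + n1 = c'' + n2" "nondeg_sym (p_part a p) e A"
        "nondeg_sym (p_part a p) c'' A'"
        "mat_congruent (p_part a p) (e + n1) (block_diag e A H) (block_diag c'' A' H')"
      by blast
    moreover from this(1) sizes have "c'' = c'"
      by simp
    ultimately show "\<exists>A A'. nondeg_sym (p_part a p) e A \<and> nondeg_sym (p_part a p) c' A' \<and>
        mat_congruent (p_part a p) (e + n1) (block_diag e A H) (block_diag c' A' H')"
      by blast
  qed
  from bchoice[OF this] obtain Ap where "\<forall>p\<in>prime_factors a. \<exists>A'. nondeg_sym (p_part a p) e (Ap p) \<and>
      nondeg_sym (p_part a p) c' A' \<and>
      mat_congruent (p_part a p) (e + n1) (block_diag e (Ap p) H) (block_diag c' A' H')"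
    by blast
  from bchoice[OF this] obtain A'p where "\<forall>p\<in>prime_factors a. nondeg_sym (p_part a p) e (Ap p) \<and>
      nondeg_sym (p_part a p) c' (A'p p) \<and>
      mat_congruent (p_part a p) (e + n1) (block_diag e (Ap p) H) (block_diag c' (A'p p) H')"
    by blast
  then show thesis
    using that[OF sizes] by blast
qed

lemma cok_equiv_imp_cok_equiv_pp:
  assumes "0 < a" and "cok_equiv a n1 H n2 H'"
  shows "cok_equiv_pp (int a) n1 H n2 H'"
proof -
  obtain e c' Ap A'p where sizes: "e + n1 = c' + n2"
    and wit: "\<And>p. p \<in> prime_factors a \<Longrightarrow> nondeg_sym (p_part a p) e (Ap p) \<and> nondeg_sym (p_part a p) c' (A'p p) \<and>
      mat_congruent (p_part a p) (e + n1) (block_diag e (Ap p) H) (block_diag c' (A'p p) H')"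
    by (rule cok_equiv_common_padding[OF assms(2)]) blast
  obtain A where A: "\<And>p. p \<in> prime_factors a \<Longrightarrow> mat_eq_mod (p_part a p) e A (Ap p)"
    by (rule mat_p_parts_crt[where a = a and n = e and F = Ap]) blast
  obtain A' where A': "\<And>p. p \<in> prime_factors a \<Longrightarrow> mat_eq_mod (p_part a p) c' A' (A'p p)"
    by (rule mat_p_parts_crt[where a = a and n = c' and F = A'p]) blast
  have "nondeg_sym (int a) e A"
    using wit nondeg_sym_cong[OF A] by (intro nondeg_sym_p_parts[OF assms(1)]) blast
  moreover have "nondeg_sym (int a) c' A'"
    using wit nondeg_sym_cong[OF A'] by (intro nondeg_sym_p_parts[OF assms(1)]) blast
  moreover have "mat_congruent (int a) (e + n1) (block_diag e A H) (block_diag c' A' H')"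
  proof (rule mat_congruent_p_parts[OF assms(1)])
    fix p assume p: "p \<in> prime_factors a"
    have "mat_eq_mod (p_part a p) (e + n1) (block_diag e A H) (block_diag e (Ap p) H)"
      by (rule mat_eq_mod_block_diag[OF A[OF p] mat_eq_mod_refl])
    also have "mat_congruent (p_part a p) (e + n1) \<dots> (block_diag c' (A'p p) H')"
      using wit[OF p] by blast
    also have "mat_eq_mod (p_part a p) (e + n1) \<dots> (block_diag c' A' H')"
      unfolding sizes by (rule mat_eq_mod_block_diag[OF mat_eq_mod_sym[OF A'[OF p]] mat_eq_mod_refl])
    finally show "mat_congruent (p_part a p) (e + n1) (block_diag e A H) (block_diag c' A' H')" .
  qed
  ultimately show ?thesis
    using sizes by (intro cok_equiv_ppI)
qed

lemma cok_class_eq: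
  assumes "cok_equiv_pp (int a) n H m K"
  shows "cok_class a n H = cok_class a m K"
proof -
  have pp: "cok_equiv_pp (p_part a p) n H m K" for p
    using assms by (rule cok_equiv_pp_dvd) (subst int_dvd_int_iff, rule multiplicity_dvd)
  have "cok_equiv a n H m' K' \<longleftrightarrow> cok_equiv a m K m' K'" for m' K'
    unfolding cok_equiv_def using cok_equiv_pp_trans[OF cok_equiv_pp_sym[OF pp]] cok_equiv_pp_trans[OF pp]
    by blast
  then show ?thesis
    unfolding cok_class_def by auto
qed

section \<open>Bordered matrices\<close>

lemma mat_eq_mod_border:
  assumes "mat_eq_mod q n D D'" and "\<And>i. i < n \<Longrightarrow> [\<eta> i = \<eta>' i] (mod q)" and "[z = z'] (mod q)"
  shows "mat_eq_mod q (n + 1) (border n D \<eta> z) (border n D' \<eta>' z')"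
  unfolding mat_eq_mod_def
proof (intro allI impI)
  fix i j assume "i < n + 1" "j < n + 1"
  then consider "i < n" "j < n" | "i < n" "j = n" | "i = n" "j < n" | "i = n" "j = n"
    by linarith
  then show "[border n D \<eta> z i j = border n D' \<eta>' z' i j] (mod q)"
    using assms by cases (simp_all add: border_def mat_eq_mod_def)
qed

lemma border_block_diag:
  "border (c + k) (block_diag c A H) (\<lambda>i. if i < c then 0 else \<xi> (i - c)) z = block_diag c A (border k H \<xi> z)"
  by (auto simp: fun_eq_iff border_def block_diag_def)

lemma mat_mult_block_diag_id_left:
  assumes "i \<le> n"
  shows "mat_mult (Suc n) (block_diag n U id_mat) Y i j = (if i < n then \<Sum>t<n. U i t * Y t j else Y n j)"
proof (cases "i < n")
  case True
  then show ?thesis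
    by (simp add: mat_mult_def block_diag_def)
next
  case False
  then show ?thesis
    using assms by (simp add: mat_mult_def block_diag_def id_mat_def)
qed

lemma mat_mult_block_diag_id_right:
  assumes "j \<le> n"
  shows "mat_mult (Suc n) Y (mat_transp (block_diag n U id_mat)) i j = (if j < n then \<Sum>t<n. Y i t * U j t else Y i n)"
proof (cases "j < n")
  case True
  then show ?thesis
    by (simp add: mat_mult_def mat_transp_def block_diag_def)
next
  case False
  then show ?thesis
    using assms by (simp add: mat_mult_def mat_transp_def block_diag_def id_mat_def)
qed

lemma sandwich_block_diag_id_border:
  assumes "i \<le> n" "j \<le> n"
  shows "sandwich (Suc n) (block_diag n U id_mat) (border n D \<eta> z) i j = border n (sandwich n U D) (mat_vec n U \<eta>) z i j"
  using assms
  by (simp add: mat_mult_block_diag_id_left mat_mult_block_diag_id_right,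
      auto simp: border_def mat_vec_def mat_mult_def mat_transp_def mult.commute)

lemma mat_congruent_border:
  assumes "invertible_mod q n U" and "mat_eq_mod q n D (sandwich n U D')"
    and "\<And>i. i < n \<Longrightarrow> [\<eta> i = mat_vec n U \<eta>' i] (mod q)"
  shows "mat_congruent q (n + 1) (border n D \<eta> z) (border n D' \<eta>' z)"
proof -
  have "mat_eq_mod q (n + 1) (border n D \<eta> z) (border n (sandwich n U D') (mat_vec n U \<eta>') z)"
    by (rule mat_eq_mod_border[OF assms(2) assms(3) cong_refl])
  also have "mat_eq_mod q (n + 1) \<dots> (sandwich (n + 1) (block_diag n U id_mat) (border n D' \<eta>' z))"
    by (rule mat_eq_modI) (simp add: sandwich_block_diag_id_border)
  finally show ?thesis
    unfolding mat_congruent_def using invertible_mod_block_diag[OF assms(1) invertible_mod_id[of q 1]] by blast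
qed

definition shear_mat :: "nat \<Rightarrow> (nat \<Rightarrow> int) \<Rightarrow> imat" where
  "shear_mat n w = (\<lambda>i j. if i = j then 1 else if i = n \<and> j < n then w j else 0)"

lemma mat_mult_shear_left:
  assumes "i \<le> n"
  shows "mat_mult (Suc n) (shear_mat n w) Y i j = Y i j + (if i = n then \<Sum>t<n. w t * Y t j else 0)"
proof (cases "i = n")
  case True
  have "(\<Sum>t<n. shear_mat n w n t * Y t j) = (\<Sum>t<n. w t * Y t j)"
    by (rule sum.cong) (auto simp: shear_mat_def)
  with True show ?thesis
    by (simp add: mat_mult_def shear_mat_def)
next
  case False
  then have "(\<Sum>t<Suc n. shear_mat n w i t * Y t j) = (\<Sum>t<Suc n. if i = t then Y t j else 0)"
    by (intro sum.cong) (auto simp: shear_mat_def)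
  with False assms show ?thesis
    by (simp add: mat_mult_def sum.delta del: sum.lessThan_Suc)
qed

lemma mat_mult_shear_right:
  assumes "j \<le> n"
  shows "mat_mult (Suc n) Y (mat_transp (shear_mat n w)) i j = Y i j + (if j = n then \<Sum>t<n. Y i t * w t else 0)"
proof (cases "j = n")
  case True
  have "(\<Sum>t<n. Y i t * shear_mat n w n t) = (\<Sum>t<n. Y i t * w t)"
    by (rule sum.cong) (auto simp: shear_mat_def)
  with True show ?thesis
    by (simp add: mat_mult_def mat_transp_def shear_mat_def)
next
  case False
  then have "(\<Sum>t<Suc n. Y i t * shear_mat n w j t) = (\<Sum>t<Suc n. if j = t then Y i t else 0)"
    by (intro sum.cong) (auto simp: shear_mat_def)
  with False assms show ?thesis
    by (simp add: mat_mult_def mat_transp_def sum.delta del: sum.lessThan_Suc)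
qed

lemma invertible_mod_shear_mat: "invertible_mod q (n + 1) (shear_mat n w)"
proof -
  have shear_col: "(\<Sum>t<n. w t * shear_mat n v t j) = (if j < n then w j else 0)" for w v j
  proof -
    have "(\<Sum>t<n. w t * shear_mat n v t j) = (\<Sum>t<n. if t = j then w t else 0)"
      by (rule sum.cong) (auto simp: shear_mat_def)
    then show ?thesis
      by (simp add: sum.delta)
  qed
  have inverse: "mat_eq_mod q (n + 1) (mat_mult (n + 1) (shear_mat n w) (shear_mat n (\<lambda>t. - w t))) id_mat" for w
    by (rule mat_eq_modI) (simp add: mat_mult_shear_left shear_col, auto simp: shear_mat_def id_mat_def)
  show ?thesis
    unfolding invertible_mod_def using inverse[of w] inverse[of "\<lambda>t. - w t"] by auto
qed

lemma border_shear_corner: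
  fixes w \<eta> :: "nat \<Rightarrow> int"
  shows "(\<Sum>t<n. w t * \<eta> t) + (\<Sum>t<n. (\<eta> t + (\<Sum>s<n. w s * D s t)) * w t)
    = 2 * (\<Sum>t<n. \<eta> t * w t) + (\<Sum>t<n. mat_vec n D w t * w t)"
proof -
  have "(\<Sum>t<n. (\<eta> t + (\<Sum>s<n. w s * D s t)) * w t) = (\<Sum>t<n. \<eta> t * w t) + (\<Sum>t<n. (\<Sum>s<n. w s * D s t) * w t)"
    by (simp add: distrib_right sum.distrib)
  moreover have "(\<Sum>t<n. w t * \<eta> t) = (\<Sum>t<n. \<eta> t * w t)"
    by (simp add: mult.commute)
  moreover have "(\<Sum>t<n. (\<Sum>s<n. w s * D s t) * w t) = (\<Sum>s<n. mat_vec n D w s * w s)"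
    unfolding mat_vec_def sum_distrib_right by (subst sum.swap) (simp add: ac_simps)
  ultimately show ?thesis
    by linarith
qed

lemma sandwich_shear_mat:
  assumes "i \<le> n" "j \<le> n"
  shows "sandwich (Suc n) (shear_mat n w) Y i j = Y i j + (if i = n then \<Sum>t<n. w t * Y t j else 0)
      + (if j = n then \<Sum>t<n. (Y i t + (if i = n then \<Sum>s<n. w s * Y s t else 0)) * w t else 0)"
  using assms by (simp add: mat_mult_shear_left mat_mult_shear_right)

lemma mat_vec_sym_mod:
  assumes "sym_mod q n D" "j < n"
  shows "[mat_vec n D w j = (\<Sum>t<n. w t * D t j)] (mod q)"
  unfolding mat_vec_def
proof (rule cong_sum)
  fix t assume "t \<in> {..<n}"
  then have "[D j t = D t j] (mod q)"
    using assms by (simp add: sym_mod_def)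
  from cong_mult[OF this cong_refl[of "w t"]] show "[D j t * w t = w t * D t j] (mod q)"
    by (simp only: mult.commute)
qed

lemma mat_congruent_border_shear:
  assumes "sym_mod q n D"
  shows "mat_congruent q (n + 1)
    (border n D (\<lambda>i. \<eta> i + mat_vec n D w i) (z + 2 * (\<Sum>i<n. \<eta> i * w i) + (\<Sum>i<n. mat_vec n D w i * w i)))
    (border n D \<eta> z)"
proof -
  let ?B = "border n D \<eta> z"
  have "mat_eq_mod q (n + 1)
      (border n D (\<lambda>i. \<eta> i + mat_vec n D w i) (z + 2 * (\<Sum>i<n. \<eta> i * w i) + (\<Sum>i<n. mat_vec n D w i * w i)))
      (sandwich (n + 1) (shear_mat n w) ?B)"
    unfolding mat_eq_mod_def
  proof (intro allI impI)
    fix i j assume "i < n + 1" "j < n + 1"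
    then consider "i < n" "j < n" | "i < n" "j = n" | "i = n" "j < n" | "i = n" "j = n"
      by linarith
    then show "[border n D (\<lambda>i. \<eta> i + mat_vec n D w i) (z + 2 * (\<Sum>i<n. \<eta> i * w i) + (\<Sum>i<n. mat_vec n D w i * w i)) i j
        = sandwich (n + 1) (shear_mat n w) ?B i j] (mod q)"
    proof cases
      case 1
      then show ?thesis
        by (simp add: sandwich_shear_mat, simp add: border_def)
    next
      case 2
      then show ?thesis
        by (simp add: sandwich_shear_mat, simp add: border_def mat_vec_def)
    next
      case 3
      then show ?thesis
        using mat_vec_sym_mod[OF assms, of j w]
        by (simp add: sandwich_shear_mat, simp add: border_def cong_add_lcancel)
    next
      case 4
      then show ?thesis
        using border_shear_corner[where n = n and w = w and \<eta> = \<eta> and D = D]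
        by (simp add: sandwich_shear_mat, simp add: border_def add.assoc)
    qed
  qed
  then show ?thesis
    unfolding mat_congruent_def using invertible_mod_shear_mat by blast
qed

lemma mat_congruent_border_block_diag:
  assumes "sym_mod q c A" and "sym_mod q k H" and "mat_eq_mod q c (mat_mult c A B) id_mat"
    and "\<And>i. i < k \<Longrightarrow> [\<xi> i = \<eta> (c + i)] (mod q)"
    and "[z = z' + (\<Sum>t<c. \<eta> t * mat_vec c B \<eta> t)] (mod q)"
  shows "mat_congruent q (c + k + 1) (border (c + k) (block_diag c A H) \<eta> z) (block_diag c A (border k H \<xi> z'))"
proof -
  define n where "n = c + k"
  define D where "D = block_diag c A H"
  define w where "w t = (if t < c then mat_vec c B \<eta> t else 0)" for t
  define \<eta>0 where "\<eta>0 i = (if i < c then 0 else \<xi> (i - c))" for i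
  have sum_w: "(\<Sum>t<n. f t * w t) = (\<Sum>t<c. f t * mat_vec c B \<eta> t)" for f :: "nat \<Rightarrow> int"
  proof -
    have "(\<Sum>t<n. f t * w t) = (\<Sum>t<c. f t * w t)"
      by (rule sum.mono_neutral_right) (auto simp: n_def w_def)
    then show ?thesis
      by (simp add: w_def)
  qed
  have Dw: "mat_vec n D w i = (if i < c then mat_vec c A (mat_vec c B \<eta>) i else 0)" for i
    unfolding mat_vec_def[of n] sum_w by (auto simp: D_def block_diag_def mat_vec_def)
  have "mat_eq_mod q (n + 1) (border n D \<eta> z)
      (border n D (\<lambda>i. \<eta>0 i + mat_vec n D w i) (z' + 2 * (\<Sum>i<n. \<eta>0 i * w i) + (\<Sum>i<n. mat_vec n D w i * w i)))"
  proof (rule mat_eq_mod_border[OF mat_eq_mod_refl])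
    fix i assume "i < n"
    show "[\<eta> i = \<eta>0 i + mat_vec n D w i] (mod q)"
    proof (cases "i < c")
      case True
      then show ?thesis
        using cong_sym[OF mat_vec_inverse_mod[OF assms(3) True, of \<eta>]] by (simp add: Dw \<eta>0_def)
    next
      case False
      with \<open>i < n\<close> have "[\<xi> (i - c) = \<eta> i] (mod q)"
        using assms(4)[of "i - c"] by (simp add: n_def)
      with False show ?thesis
        using cong_sym by (simp add: Dw \<eta>0_def)
    qed
  next
    have "(\<Sum>i<n. \<eta>0 i * w i) = 0"
      by (simp add: sum_w \<eta>0_def)
    have "[(\<Sum>i<n. mat_vec n D w i * w i) = (\<Sum>t<c. \<eta> t * mat_vec c B \<eta> t)] (mod q)"
      unfolding sum_w
    proof (rule cong_sum)
      fix t assume "t \<in> {..<c}"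
      then have "[mat_vec n D w t = \<eta> t] (mod q)"
        using mat_vec_inverse_mod[OF assms(3)] by (simp add: Dw)
      then show "[mat_vec n D w t * mat_vec c B \<eta> t = \<eta> t * mat_vec c B \<eta> t] (mod q)"
        by (rule cong_mult[OF _ cong_refl])
    qed
    then have "[z' + (\<Sum>t<c. \<eta> t * mat_vec c B \<eta> t) = z' + 2 * (\<Sum>i<n. \<eta>0 i * w i) + (\<Sum>i<n. mat_vec n D w i * w i)] (mod q)"
      using cong_add[OF cong_refl[of z'] cong_sym] \<open>(\<Sum>i<n. \<eta>0 i * w i) = 0\<close> by simp
    with assms(5) show "[z = z' + 2 * (\<Sum>i<n. \<eta>0 i * w i) + (\<Sum>i<n. mat_vec n D w i * w i)] (mod q)"
      by (rule cong_trans)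
  qed
  also have "mat_congruent q (n + 1) \<dots> (border n D \<eta>0 z')"
    by (rule mat_congruent_border_shear) (simp add: D_def sym_mod_block_diag assms(1,2) n_def)
  also have "border n D \<eta>0 z' = block_diag c A (border k H \<xi> z')"
    unfolding n_def D_def \<eta>0_def by (rule border_block_diag)
  finally show ?thesis
    unfolding n_def D_def .
qed

lemma bij_betw_sample_space_Suc:
  "bij_betw (\<lambda>(z, \<eta>). ((z, \<eta>(n := 0)), \<eta> n)) (sample_space a (Suc n)) (sample_space a n \<times> {0..<int a})"
  by (rule bij_betw_byWitness[where f' = "\<lambda>((z, \<eta>), x). (z, \<eta>(n := x))"])
     (auto simp: sample_space_def less_Suc_eq)

lemma finite_sample_space: "finite (sample_space a n)"
proof (induction n)
  case 0
  have "sample_space a 0 = {0..<int a} \<times> {\<lambda>_. 0}"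
    by (auto simp: sample_space_def)
  then show ?case
    by simp
next
  case (Suc n)
  then show ?case
    using bij_betw_finite[OF bij_betw_sample_space_Suc] by simp
qed

lemma sample_space_nonempty:
  assumes "0 < a"
  shows "sample_space a n \<noteq> {}"
proof -
  have "(0, \<lambda>_. 0) \<in> sample_space a n"
    using assms by (simp add: sample_space_def)
  then show ?thesis
    by blast
qed

lemma pmf_of_set_Times:
  assumes "A \<noteq> {}" "finite A" "B \<noteq> {}" "finite B"
  shows "pmf_of_set (A \<times> B) = pair_pmf (pmf_of_set A) (pmf_of_set B)"
proof (rule pmf_eqI)
  fix x :: "'a \<times> 'b"
  show "pmf (pmf_of_set (A \<times> B)) x = pmf (pair_pmf (pmf_of_set A) (pmf_of_set B)) x"
    using assms by (cases x) (simp add: pmf_pair card_cartesian_product indicator_def)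
qed

lemma map_pmf_sample_space_Suc:
  assumes "0 < a"
  shows "map_pmf (\<lambda>(z, \<eta>). (z, \<eta>(n := 0))) (pmf_of_set (sample_space a (Suc n))) = pmf_of_set (sample_space a n)"
proof -
  let ?h = "\<lambda>(z, \<eta>). ((z, \<eta>(n := 0)), \<eta> n)"
  have "map_pmf ?h (pmf_of_set (sample_space a (Suc n))) = pmf_of_set (sample_space a n \<times> {0..<int a})"
    using bij_betw_sample_space_Suc sample_space_nonempty[OF assms] finite_sample_space
    by (rule map_pmf_of_set_bij_betw)
  also have "\<dots> = pair_pmf (pmf_of_set (sample_space a n)) (pmf_of_set {0..<int a})"
    using assms by (intro pmf_of_set_Times) (simp_all add: sample_space_nonempty finite_sample_space)
  finally have "map_pmf fst (map_pmf ?h (pmf_of_set (sample_space a (Suc n)))) = pmf_of_set (sample_space a n)"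
    by (simp add: map_fst_pair_pmf)
  then show ?thesis
    by (simp add: map_pmf_comp split_def)
qed

lemma map_pmf_of_set_reindex:
  assumes "finite S" "S \<noteq> {}" "bij_betw T S S" and "\<And>x. x \<in> S \<Longrightarrow> g (T x) = f x"
  shows "map_pmf f (pmf_of_set S) = map_pmf g (pmf_of_set S)"
proof -
  have "map_pmf g (pmf_of_set S) = map_pmf g (map_pmf T (pmf_of_set S))"
    using map_pmf_of_set_bij_betw[OF assms(3,2,1)] by simp
  also have "\<dots> = map_pmf (\<lambda>x. g (T x)) (pmf_of_set S)"
    by (simp add: map_pmf_comp)
  also have "\<dots> = map_pmf f (pmf_of_set S)"
    using assms(1,2,4) by (intro map_pmf_cong) auto
  finally show ?thesis ..
qed

section \<open>Distribution of the class of a random bordered matrix\<close>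

definition border_class_dist :: "nat \<Rightarrow> nat \<Rightarrow> imat \<Rightarrow> nat \<Rightarrow> (nat \<times> imat) set pmf" where
  "border_class_dist a n M N =
     map_pmf (\<lambda>(z, xi). cok_class a (n + 1) (border n M xi z)) (pmf_of_set (sample_space a N))"

lemma border_class_dist_sample_size:
  assumes "0 < a" and "n \<le> N"
  shows "border_class_dist a n M N = border_class_dist a n M n"
  using assms(2)
proof (induction N rule: dec_induct)
  case base
  show ?case ..
next
  case (step k)
  let ?f = "\<lambda>(z, xi). cok_class a (n + 1) (border n M xi z)"
  have drop: "border n M (\<eta>(k := 0)) z = border n M \<eta> z" for \<eta> z
    using step(1) by (auto simp: fun_eq_iff border_def)
  then have "?f = (\<lambda>x. ?f ((\<lambda>(z, \<eta>). (z, \<eta>(k := 0))) x))"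
    by (intro ext) (simp add: drop split_def)
  then have "border_class_dist a n M (Suc k)
      = map_pmf ?f (map_pmf (\<lambda>(z, \<eta>). (z, \<eta>(k := 0))) (pmf_of_set (sample_space a (Suc k))))"
    unfolding border_class_dist_def map_pmf_comp by metis
  also have "\<dots> = border_class_dist a n M k"
    unfolding border_class_dist_def map_pmf_sample_space_Suc[OF assms(1)] ..
  finally show ?case
    using step(3) by simp
qed

lemma mat_vec_mod_inverse:
  assumes "mat_eq_mod (int a) n (mat_mult n U V) id_mat" and "i < n"
  shows "[\<eta> i = mat_vec n U (\<lambda>j. if j < n then mat_vec n V \<eta> j mod int a else 0) i] (mod int a)"
proof -
  have "[mat_vec n U (\<lambda>j. if j < n then mat_vec n V \<eta> j mod int a else 0) i = mat_vec n U (mat_vec n V \<eta>) i] (mod int a)"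
    by (rule mat_vec_cong) (simp add: cong_def)
  from cong_trans[OF this mat_vec_inverse_mod[OF assms]] show ?thesis
    by (rule cong_sym)
qed

lemma bij_betw_sample_space_mat_vec:
  assumes "0 < a" and "mat_eq_mod (int a) n (mat_mult n U V) id_mat"
  shows "bij_betw (\<lambda>(z, \<eta>). (z, \<lambda>i. if i < n then mat_vec n V \<eta> i mod int a else 0))
    (sample_space a n) (sample_space a n)" (is "bij_betw ?T _ _")
proof -
  have "inj_on ?T (sample_space a n)"
  proof (rule inj_onI)
    fix x y assume x: "x \<in> sample_space a n" and y: "y \<in> sample_space a n" and "?T x = ?T y"
    obtain z \<eta> z' \<eta>' where xy: "x = (z, \<eta>)" "y = (z', \<eta>')"
      by (cases x, cases y)
    have "\<eta> i = \<eta>' i" for i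
    proof (cases "i < n")
      case True
      have "(\<lambda>j. if j < n then mat_vec n V \<eta> j mod int a else 0) = (\<lambda>j. if j < n then mat_vec n V \<eta>' j mod int a else 0)"
        using \<open>?T x = ?T y\<close> xy by simp
      then have "[\<eta> i = \<eta>' i] (mod int a)"
        using mat_vec_mod_inverse[OF assms(2) True, of \<eta>] mat_vec_mod_inverse[OF assms(2) True, of \<eta>']
        by (metis cong_sym cong_trans)
      then show ?thesis
        using x y True unfolding xy sample_space_def by (intro cong_less_imp_eq_int) auto
    next
      case False
      then show ?thesis
        using x y unfolding xy sample_space_def by auto
    qed
    then show "x = y"
      using \<open>?T x = ?T y\<close> xy by auto
  qed
  moreover have "?T ` sample_space a n \<subseteq> sample_space a n"
    using assms(1) by (auto simp: sample_space_def)
  ultimately show ?thesis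
    by (simp add: bij_betw_def endo_inj_surj finite_sample_space)
qed

lemma border_class_dist_congruent:
  assumes "0 < a" and "mat_congruent (int a) n X Y"
  shows "border_class_dist a n X n = border_class_dist a n Y n"
proof -
  obtain U V where U: "invertible_mod (int a) n U" "mat_eq_mod (int a) n X (sandwich n U Y)"
    and V: "mat_eq_mod (int a) n (mat_mult n U V) id_mat"
    using assms(2) unfolding mat_congruent_def invertible_mod_def by blast
  show ?thesis
    unfolding border_class_dist_def
  proof (rule map_pmf_of_set_reindex[OF finite_sample_space sample_space_nonempty[OF assms(1)]
        bij_betw_sample_space_mat_vec[OF assms(1) V]])
    fix x :: "int \<times> (nat \<Rightarrow> int)"
    obtain z \<eta> where x: "x = (z, \<eta>)"
      by (cases x)
    have "mat_congruent (int a) (n + 1) (border n X \<eta> z)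
        (border n Y (\<lambda>i. if i < n then mat_vec n V \<eta> i mod int a else 0) z)"
      using U mat_vec_mod_inverse[OF V] by (rule mat_congruent_border)
    then have "cok_class a (n + 1) (border n X \<eta> z)
        = cok_class a (n + 1) (border n Y (\<lambda>i. if i < n then mat_vec n V \<eta> i mod int a else 0) z)"
      by (intro cok_class_eq mat_congruent_imp_cok_equiv_pp)
    then show "(\<lambda>(z, xi). cok_class a (n + 1) (border n Y xi z))
          ((\<lambda>(z, \<eta>). (z, \<lambda>i. if i < n then mat_vec n V \<eta> i mod int a else 0)) x)
        = (\<lambda>(z, xi). cok_class a (n + 1) (border n X xi z)) x"
      unfolding x by simp
  qed
qed

lemma cok_class_border_block_diag:
  assumes "nondeg_sym (int a) c A" and "sym_mod (int a) m M" and "mat_eq_mod (int a) c (mat_mult c A B) id_mat"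
    and "\<And>i. i < m \<Longrightarrow> \<xi> i = \<eta> (c + i)"
  shows "cok_class a (c + m + 1) (border (c + m) (block_diag c A M) \<eta> z)
    = cok_class a (m + 1) (border m M \<xi> ((z - (\<Sum>t<c. \<eta> t * mat_vec c B \<eta> t)) mod int a))"
proof -
  let ?z' = "(z - (\<Sum>t<c. \<eta> t * mat_vec c B \<eta> t)) mod int a"
  have "[z = ?z' + (\<Sum>t<c. \<eta> t * mat_vec c B \<eta> t)] (mod int a)"
    by (simp add: cong_def mod_add_left_eq)
  then have "mat_congruent (int a) (c + m + 1) (border (c + m) (block_diag c A M) \<eta> z)
      (block_diag c A (border m M \<xi> ?z'))"
    using assms unfolding nondeg_sym_def by (intro mat_congruent_border_block_diag) simp_all
  then have "cok_equiv_pp (int a) (c + (m + 1)) (border (c + m) (block_diag c A M) \<eta> z) (m + 1) (border m M \<xi> ?z')"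
    using assms(1) by (intro cok_equiv_pp_stabilize) (simp_all add: add.assoc)
  then show ?thesis
    by (simp add: cok_class_eq add.assoc)
qed

lemma border_class_dist_block_diag:
  assumes "0 < a" and "nondeg_sym (int a) c A" and "sym_mod (int a) m M"
  shows "border_class_dist a (c + m) (block_diag c A M) (c + m) = border_class_dist a m M m"
proof -
  obtain B where B: "mat_eq_mod (int a) c (mat_mult c A B) id_mat"
    using assms(2) unfolding nondeg_sym_def invertible_mod_def by blast
  define \<phi> where "\<phi> \<eta> = (\<Sum>t<c. \<eta> t * mat_vec c B \<eta> t)" for \<eta>
  \<comment> \<open>move the coordinates along \<open>A\<close> behind those along \<open>M\<close>\<close>
  define rot where "rot \<eta> i = (if i < m then \<eta> (c + i) else if i < c + m then \<eta> (i - m) else 0)"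
    for \<eta> :: "nat \<Rightarrow> int" and i
  define unrot where "unrot \<eta> i = (if i < c then \<eta> (m + i) else if i < c + m then \<eta> (i - c) else 0)"
    for \<eta> :: "nat \<Rightarrow> int" and i
  define T where "T = (\<lambda>(z :: int, \<eta>). ((z - \<phi> \<eta>) mod int a, rot \<eta>))"
  have unrot_rot: "unrot (rot \<eta>) = \<eta>" if "\<forall>i\<ge>c + m. \<eta> i = 0" for \<eta>
    using that by (auto simp: fun_eq_iff rot_def unrot_def)
  have rot_unrot: "rot (unrot \<eta>) = \<eta>" if "\<forall>i\<ge>c + m. \<eta> i = 0" for \<eta>
    using that by (auto simp: fun_eq_iff rot_def unrot_def)
  have "bij_betw T (sample_space a (c + m)) (sample_space a (c + m))"
    by (rule bij_betw_byWitness[where f' = "\<lambda>(z, \<eta>). ((z + \<phi> (unrot \<eta>)) mod int a, unrot \<eta>)"])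
       (use assms(1) in \<open>auto simp: T_def sample_space_def unrot_rot rot_unrot mod_add_left_eq mod_diff_left_eq,
         auto simp: rot_def unrot_def\<close>)
  then have "border_class_dist a (c + m) (block_diag c A M) (c + m) = border_class_dist a m M (c + m)"
    unfolding border_class_dist_def
  proof (rule map_pmf_of_set_reindex[OF finite_sample_space sample_space_nonempty[OF assms(1)]])
    fix x :: "int \<times> (nat \<Rightarrow> int)"
    obtain z \<eta> where x: "x = (z, \<eta>)"
      by (cases x)
    have "cok_class a (c + m + 1) (border (c + m) (block_diag c A M) \<eta> z)
        = cok_class a (m + 1) (border m M (rot \<eta>) ((z - \<phi> \<eta>) mod int a))"
      unfolding \<phi>_def by (rule cok_class_border_block_diag[OF assms(2,3) B]) (simp add: rot_def)
    then show "(\<lambda>(z, xi). cok_class a (m + 1) (border m M xi z)) (T x)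
        = (\<lambda>(z, xi). cok_class a (c + m + 1) (border (c + m) (block_diag c A M) xi z)) x"
      unfolding x T_def by simp
  qed
  also have "\<dots> = border_class_dist a m M m"
    using assms(1) by (rule border_class_dist_sample_size) simp
  finally show ?thesis .
qed

theorem mainTheorem7:
  fixes a n1 n2 :: nat and M M' :: imat
  assumes "a \<ge> 2" and "n1 \<ge> 1" and "n2 \<ge> 1"
    and "sym_int n1 M" and "sym_int n2 M'"
    and "cok_equiv a n1 M n2 M'"
  shows "map_pmf (\<lambda>(z, xi). cok_class a (n1 + 1) (border n1 M xi z))
            (pmf_of_set (sample_space a (max n1 n2)))
       = map_pmf (\<lambda>(z, xi). cok_class a (n2 + 1) (border n2 M' xi z))
            (pmf_of_set (sample_space a (max n1 n2)))"
proof -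
  have a: "0 < a"
    using assms(1) by simp
  obtain c A c' A' where sizes: "c + n1 = c' + n2" and "nondeg_sym (int a) c A" "nondeg_sym (int a) c' A'"
    and congruent: "mat_congruent (int a) (c + n1) (block_diag c A M) (block_diag c' A' M')"
    using cok_equiv_imp_cok_equiv_pp[OF a assms(6)] unfolding cok_equiv_pp_iff by blast
  have "border_class_dist a n1 M (max n1 n2) = border_class_dist a n1 M n1"
    using a by (rule border_class_dist_sample_size) simp
  also have "\<dots> = border_class_dist a (c + n1) (block_diag c A M) (c + n1)"
    using a \<open>nondeg_sym (int a) c A\<close> sym_int_imp_sym_mod[OF assms(4)]
    by (rule border_class_dist_block_diag[symmetric])
  also have "\<dots> = border_class_dist a (c' + n2) (block_diag c' A' M') (c' + n2)"
    using border_class_dist_congruent[OF a congruent] by (simp only: sizes)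
  also have "\<dots> = border_class_dist a n2 M' n2"
    using a \<open>nondeg_sym (int a) c' A'\<close> sym_int_imp_sym_mod[OF assms(5)]
    by (rule border_class_dist_block_diag)
  also have "\<dots> = border_class_dist a n2 M' (max n1 n2)"
    using a by (rule border_class_dist_sample_size[symmetric]) simp
  finally show ?thesis
    unfolding border_class_dist_def .
qed

end
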